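(* Consider an underactuated robotic system with configuration $\mathbf{q}=(\mathbf{q}_1,\mathbf{q}_2)\in\mathcal{Q}$, $\mathbf{q}_1\in\mathcal{Q}_1\subset\mathbb{R}^{n_1}$ (actuated), $\mathbf{q}_2\in\mathcal{Q}_2\subset\mathbb{R}^{n_2}$ (passive), with dynamics $$\begin{bmatrix}\mathbf{D}_{11}(\mathbf{q})&\mathbf{D}_{12}(\mathbf{q})\\ \mathbf{D}_{21}(\mathbf{q})&\mathbf{D}_{22}(\mathbf{q})\end{bmatrix}\begin{bmatrix}\ddot{\mathbf{q}}_1\\ \ddot{\mathbf{q}}_2\end{bmatrix}+\begin{bmatrix}\mathbf{H}_1(\mathbf{q},\dot{\mathbf{q}})\\ \mathbf{H}_2(\mathbf{q},\dot{\mathbf{q}})\end{bmatrix}=\begin{bmatrix}\mathbf{B}_1\\ \mathbf{0}\end{bmatrix}\mathbf{u},\qquad \mathbf{u}\in\mathbb{R}^m,$$ and let $\dot{\mathbf{x}}=\mathbf{f}(\mathbf{x})+\mathbf{g}(\mathbf{x})\mathbf{u}$, $\mathbf{x}=(\mathbf{q},\dot{\mathbf{q}})$, be its control affine form, $\mathbf{f}(\mathbf{x})=(\dot{\mathbf{q}},-\mathbf{D}(\mathbf{q})^{-1}\mathbf{H}(\mathbf{q},\dot{\mathbf{q}}))$, $\mathbf{g}(\mathbf{x})=(\mathbf{0},\mathbf{D}(\mathbf{q})^{-1}\mathbf{B})$. Let $h_{0,1}:\mathcal{Q}_1\to\mathbb{R}$ be continuously differentiable, defining $\mathcal{C}_0=\{\mathbf{q}\in\mathcal{Q}:h_{0,1}(\mathbf{q}_1)\ge0\}$.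 Suppose $\mathbf{B}_1\in\mathbb{R}^{n_1\times m}$ is pseudo-invertible and $\mathbf{k}_{0,1}:\mathcal{Q}_1\to\mathbb{R}^{n_1}$ is continuously differentiable with $\nabla h_{0,1}(\mathbf{q}_1)\cdot\mathbf{k}_{0,1}(\mathbf{q}_1)>-\alpha(h_{0,1}(\mathbf{q}_1))$ for all $\mathbf{q}_1\in\mathcal{Q}_1$, for some extended class $\mathcal{K}_\infty$ function $\alpha$. For $\mu>0$ let $$h(\mathbf{q},\dot{\mathbf{q}})=h_{0,1}(\mathbf{q}_1)-\frac{1}{2\mu}(\dot{\mathbf{q}}_1-\mathbf{k}_{0,1}(\mathbf{q}_1))^\top\bar{\mathbf{D}}_1(\mathbf{q})(\dot{\mathbf{q}}_1-\mathbf{k}_{0,1}(\mathbf{q}_1)),$$ where $\bar{\mathbf{D}}_1(\mathbf{q})=\mathbf{D}_{11}(\mathbf{q})-\mathbf{D}_{12}(\mathbf{q})\mathbf{D}_{22}(\mathbf{q})^{-1}\mathbf{D}_{21}(\mathbf{q})$. Then $h$ is a control barrier function for $\dot{\mathbf{x}}=\mathbf{f}(\mathbf{x})+\mathbf{g}(\mathbf{x})\mathbf{u}$ on $\mathcal{C}=\{(\mathbf{q},\dot{\mathbf{q}}):h(\mathbf{q},\dot{\mathbf{q}})\ge0\}$.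
   Context: $\mathbf{D}(\mathbf{q})$ (the block matrix) is the symmetric positive definite, continuously differentiable inertia matrix, so $\mathbf{D}_{22}$ and the Schur complement $\bar{\mathbf{D}}_1$ are positive definite; $\mathbf{H}=\mathbf{C}\dot{\mathbf{q}}+\mathbf{G}$ collects Coriolis and gravity terms. "Pseudo-invertible" is used in the sense that $\mathbf{v}^\top\mathbf{B}_1=\mathbf{0}$ implies $\mathbf{v}=\mathbf{0}$ (full row rank). An extended class $\mathcal{K}_\infty$ function is a continuous strictly increasing $\alpha:\mathbb{R}\to\mathbb{R}$ with $\alpha(0)=0$, $\alpha(s)\to\pm\infty$ as $s\to\pm\infty$. With $L_{\mathbf{f}}h=\nabla h\cdot\mathbf{f}$, $L_{\mathbf{g}}h=\nabla h^\top\mathbf{g}$, a continuously differentiable $h$ is a CBF on $\{h\ge0\}$ if there exists an extended class $\mathcal{K}_\infty$ function $\alpha$ such that for all states $\mathbf{x}$, $\sup_{\mathbf{u}\in\mathbb{R}^m}\{L_{\mathbf{f}}h(\mathbf{x})+L_{\mathbf{g}}h(\mathbf{x})\mathbf{u}\}>-\alpha(h(\mathbf{x}))$. *)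

theory Defs
  imports "HOL-Analysis.Analysis"
begin

definition C1_on :: "'a::euclidean_space set \<Rightarrow> ('a \<Rightarrow> 'b::real_normed_vector) \<Rightarrow> bool" where
  "C1_on S f \<longleftrightarrow> (\<exists>f'. (\<forall>x\<in>S. (f has_derivative blinfun_apply (f' x)) (at x)) \<and> continuous_on S f')"

definition ext_class_Kinf :: "(real \<Rightarrow> real) \<Rightarrow> bool" where
  "ext_class_Kinf \<alpha> \<longleftrightarrow> continuous_on UNIV \<alpha> \<and> strict_mono \<alpha> \<and> \<alpha> 0 = 0 \<and>
     filterlim \<alpha> at_top at_top \<and> filterlim \<alpha> at_bot at_bot"

definition Lie_f :: "('x::real_normed_vector \<Rightarrow> real) \<Rightarrow> ('x \<Rightarrow> 'x) \<Rightarrow> 'x \<Rightarrow> real" where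
  "Lie_f h f x = frechet_derivative h (at x) (f x)"

definition Lie_g :: "('x::real_normed_vector \<Rightarrow> real) \<Rightarrow> ('x \<Rightarrow> 'u \<Rightarrow> 'x) \<Rightarrow> 'x \<Rightarrow> 'u \<Rightarrow> real" where
  "Lie_g h g x u = frechet_derivative h (at x) (g x u)"

text \<open>The supremum condition
  sup_u (Lf h + Lg h u) > -alpha(h x) is unfolded as existence of a u exceeding the bound.\<close>
definition is_CBF_on :: "'x::euclidean_space set \<Rightarrow> ('x \<Rightarrow> 'x) \<Rightarrow> ('x \<Rightarrow> 'u \<Rightarrow> 'x) \<Rightarrow> ('x \<Rightarrow> real) \<Rightarrow> 'x set \<Rightarrow> bool" where
  "is_CBF_on X f g h C \<longleftrightarrow> C = {x\<in>X. h x \<ge> 0} \<and> C1_on X h \<and>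
     (\<exists>\<alpha>. ext_class_Kinf \<alpha> \<and> (\<forall>x\<in>X. \<exists>u. Lie_f h f x + Lie_g h g x u > - \<alpha> (h x)))"

definition blockmul :: "real^'a^'a \<Rightarrow> real^'b^'a \<Rightarrow> real^'a^'b \<Rightarrow> real^'b^'b
    \<Rightarrow> ((real^'a) \<times> (real^'b)) \<Rightarrow> ((real^'a) \<times> (real^'b))" where
  "blockmul A11 A12 A21 A22 v = (A11 *v fst v + A12 *v snd v, A21 *v fst v + A22 *v snd v)"

text \<open>Control-affine form: state x = (q, qdot), q = (q1, q2), qdot = (qdot1, qdot2).
  f(x) = (qdot, - D(q)^{-1} H(q,qdot)), g(x) u = (0, D(q)^{-1} (B1 u, 0)).\<close>
definition ua_f :: "((real^'a) \<times> (real^'b) \<Rightarrow> real^'a^'a) \<Rightarrow> ((real^'a) \<times> (real^'b) \<Rightarrow> real^'b^'a)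
    \<Rightarrow> ((real^'a) \<times> (real^'b) \<Rightarrow> real^'a^'b) \<Rightarrow> ((real^'a) \<times> (real^'b) \<Rightarrow> real^'b^'b)
    \<Rightarrow> (((real^'a) \<times> (real^'b)) \<times> ((real^'a) \<times> (real^'b)) \<Rightarrow> (real^'a) \<times> (real^'b))
    \<Rightarrow> ((real^'a) \<times> (real^'b)) \<times> ((real^'a) \<times> (real^'b)) \<Rightarrow> ((real^'a) \<times> (real^'b)) \<times> ((real^'a) \<times> (real^'b))" where
  "ua_f D11 D12 D21 D22 H x =
     (snd x, - inv (blockmul (D11 (fst x)) (D12 (fst x)) (D21 (fst x)) (D22 (fst x))) (H x))"

definition ua_g :: "((real^'a) \<times> (real^'b) \<Rightarrow> real^'a^'a) \<Rightarrow> ((real^'a) \<times> (real^'b) \<Rightarrow> real^'b^'a)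
    \<Rightarrow> ((real^'a) \<times> (real^'b) \<Rightarrow> real^'a^'b) \<Rightarrow> ((real^'a) \<times> (real^'b) \<Rightarrow> real^'b^'b)
    \<Rightarrow> real^'m^'a
    \<Rightarrow> ((real^'a) \<times> (real^'b)) \<times> ((real^'a) \<times> (real^'b)) \<Rightarrow> real^'m \<Rightarrow> ((real^'a) \<times> (real^'b)) \<times> ((real^'a) \<times> (real^'b))" where
  "ua_g D11 D12 D21 D22 B1 x u =
     (0, inv (blockmul (D11 (fst x)) (D12 (fst x)) (D21 (fst x)) (D22 (fst x))) (B1 *v u, 0))"

definition schur1 :: "((real^'a) \<times> (real^'b) \<Rightarrow> real^'a^'a) \<Rightarrow> ((real^'a) \<times> (real^'b) \<Rightarrow> real^'b^'a)
    \<Rightarrow> ((real^'a) \<times> (real^'b) \<Rightarrow> real^'a^'b) \<Rightarrow> ((real^'a) \<times> (real^'b) \<Rightarrow> real^'b^'b)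
    \<Rightarrow> (real^'a) \<times> (real^'b) \<Rightarrow> real^'a^'a" where
  "schur1 D11 D12 D21 D22 q = D11 q - D12 q ** matrix_inv (D22 q) ** D21 q"

definition ua_h :: "((real^'a) \<times> (real^'b) \<Rightarrow> real^'a^'a) \<Rightarrow> ((real^'a) \<times> (real^'b) \<Rightarrow> real^'b^'a)
    \<Rightarrow> ((real^'a) \<times> (real^'b) \<Rightarrow> real^'a^'b) \<Rightarrow> ((real^'a) \<times> (real^'b) \<Rightarrow> real^'b^'b)
    \<Rightarrow> (real^'a \<Rightarrow> real) \<Rightarrow> (real^'a \<Rightarrow> real^'a) \<Rightarrow> real
    \<Rightarrow> ((real^'a) \<times> (real^'b)) \<times> ((real^'a) \<times> (real^'b)) \<Rightarrow> real" where
  "ua_h D11 D12 D21 D22 h01 k01 \<mu> x =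
     (let q = fst x; q1 = fst q; e = fst (snd x) - k01 q1
      in h01 q1 - (1 / (2 * \<mu>)) * (e \<bullet> (schur1 D11 D12 D21 D22 q *v e)))"

end

(*
  Along the reference velocity qdot1 = k01(q1) the quadratic term of h vanishes together with its
  derivative, so there h = h01, L_g h = 0 and L_f h = grad h01 . k01 > -alpha(h).  Away from it,
  e = qdot1 - k01(q1) is nonzero, and L_g h u = -(1/mu) e^T B1 u: the Schur complement Dbar1 maps the
  actuated block of D^{-1} (B1 u, 0) back to B1 u.  Since B1 has full row rank, e^T B1 is nonzero,
  so a suitable u makes L_f h + L_g h u exceed any bound.  Continuous differentiability of h comes
  from that of D, matrix inversion being smooth by Cramer's rule.
*)
theory Submission
  imports Defs
begin

section \<open>Continuously differentiable maps\<close>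

text \<open>The derivative need only be continuous in each fixed direction, which makes the closure
  rules below easy to prove; on Euclidean domains this agrees with \<^const>\<open>C1_on\<close>.\<close>

definition C1_pointwise_on :: "'x::real_normed_vector set \<Rightarrow> ('x \<Rightarrow> 'y::real_normed_vector) \<Rightarrow> bool" where
  "C1_pointwise_on S f \<longleftrightarrow>
     (\<exists>f'. (\<forall>x\<in>S. (f has_derivative f' x) (at x)) \<and> (\<forall>v. continuous_on S (\<lambda>x. f' x v)))"

lemma C1_pointwise_onI:
  assumes "\<And>x. x \<in> S \<Longrightarrow> (f has_derivative f' x) (at x)" "\<And>v. continuous_on S (\<lambda>x. f' x v)"
  shows "C1_pointwise_on S f"
  using assms unfolding C1_pointwise_on_def by blast

lemma C1_pointwise_onE:
  assumes "C1_pointwise_on S f"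
  obtains f' where "\<And>x. x \<in> S \<Longrightarrow> (f has_derivative f' x) (at x)" "\<And>v. continuous_on S (\<lambda>x. f' x v)"
  using assms unfolding C1_pointwise_on_def by blast

lemma C1_pointwise_on_imp_continuous_on: "C1_pointwise_on S f \<Longrightarrow> continuous_on S f"
  by (elim C1_pointwise_onE) (meson continuous_at_imp_continuous_on has_derivative_continuous)

lemma C1_on_iff_C1_pointwise_on:
  fixes f :: "'x::euclidean_space \<Rightarrow> 'y::real_normed_vector"
  shows "C1_on S f \<longleftrightarrow> C1_pointwise_on S f"
proof
  assume "C1_on S f"
  then obtain F where "\<forall>x\<in>S. (f has_derivative blinfun_apply (F x)) (at x)" "continuous_on S F"
    unfolding C1_on_def by blast
  then show "C1_pointwise_on S f"
    by (intro C1_pointwise_onI[of S f "\<lambda>x. blinfun_apply (F x)"]) (auto intro: continuous_intros)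
next
  assume "C1_pointwise_on S f"
  then obtain f' where der: "\<And>x. x \<in> S \<Longrightarrow> (f has_derivative f' x) (at x)"
    and cont: "\<And>v. continuous_on S (\<lambda>x. f' x v)"
    by (metis C1_pointwise_onE)
  have apply_Blinfun: "blinfun_apply (Blinfun (f' x)) = f' x" if "x \<in> S" for x
    using der[OF that] by (intro bounded_linear_Blinfun_apply has_derivative_bounded_linear)
  have "continuous_on S (\<lambda>x. Blinfun (f' x))"
  proof (rule continuous_on_blinfun_componentwise)
    fix i :: 'x
    show "continuous_on S (\<lambda>x. blinfun_apply (Blinfun (f' x)) i)"
      using cont[of i] by (rule continuous_on_eq) (simp add: apply_Blinfun)
  qed
  with der apply_Blinfun show "C1_on S f"
    unfolding C1_on_def by (intro exI[of _ "\<lambda>x. Blinfun (f' x)"]) simp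
qed

lemma C1_pointwise_on_bounded_linear: "bounded_linear L \<Longrightarrow> C1_pointwise_on S L"
  by (rule C1_pointwise_onI[of S L "\<lambda>x. L"]) (simp_all add: bounded_linear_imp_has_derivative)

lemma C1_pointwise_on_const [simp]: "C1_pointwise_on S (\<lambda>x. c)"
  by (rule C1_pointwise_onI[of S _ "\<lambda>x v. 0"]) simp_all

lemma C1_pointwise_on_linear_compose:
  assumes L: "bounded_linear L" and f: "C1_pointwise_on S f"
  shows "C1_pointwise_on S (\<lambda>x. L (f x))"
proof -
  obtain f' where "\<And>x. x \<in> S \<Longrightarrow> (f has_derivative f' x) (at x)"
    and "\<And>v. continuous_on S (\<lambda>x. f' x v)"
    using f by (metis C1_pointwise_onE)
  then show ?thesis
    by (intro C1_pointwise_onI[of S _ "\<lambda>x v. L (f' x v)"]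
        bounded_linear.has_derivative[OF L] bounded_linear.continuous_on[OF L])
qed

lemma C1_pointwise_on_add:
  assumes "C1_pointwise_on S f" "C1_pointwise_on S g"
  shows "C1_pointwise_on S (\<lambda>x. f x + g x)"
proof -
  obtain f' where "\<And>x. x \<in> S \<Longrightarrow> (f has_derivative f' x) (at x)"
    and "\<And>v. continuous_on S (\<lambda>x. f' x v)"
    using assms(1) by (metis C1_pointwise_onE)
  moreover obtain g' where "\<And>x. x \<in> S \<Longrightarrow> (g has_derivative g' x) (at x)"
    and "\<And>v. continuous_on S (\<lambda>x. g' x v)"
    using assms(2) by (metis C1_pointwise_onE)
  ultimately show ?thesis
    by (intro C1_pointwise_onI[of S _ "\<lambda>x v. f' x v + g' x v"] has_derivative_add continuous_on_add)
qed

lemma C1_pointwise_on_diff: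
  assumes "C1_pointwise_on S f" "C1_pointwise_on S g"
  shows "C1_pointwise_on S (\<lambda>x. f x - g x)"
  using C1_pointwise_on_add[OF assms(1)
      C1_pointwise_on_linear_compose[OF bounded_linear_minus[OF bounded_linear_ident] assms(2)]]
  by simp

lemma C1_pointwise_on_bilinear:
  fixes prod :: "'a::real_normed_vector \<Rightarrow> 'b::real_normed_vector \<Rightarrow> 'c::real_normed_vector"
    and f :: "'x::real_normed_vector \<Rightarrow> 'a" and g :: "'x \<Rightarrow> 'b"
  assumes prod: "bounded_bilinear prod"
    and f: "C1_pointwise_on S f" and g: "C1_pointwise_on S g"
  shows "C1_pointwise_on S (\<lambda>x. prod (f x) (g x))"
proof -
  obtain f' where f'_der: "\<And>x. x \<in> S \<Longrightarrow> (f has_derivative f' x) (at x)"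
    and f'_cont: "\<And>v. continuous_on S (\<lambda>x. f' x v)"
    using f by (metis C1_pointwise_onE)
  obtain g' where g'_der: "\<And>x. x \<in> S \<Longrightarrow> (g has_derivative g' x) (at x)"
    and g'_cont: "\<And>v. continuous_on S (\<lambda>x. g' x v)"
    using g by (metis C1_pointwise_onE)
  have "continuous_on S f" "continuous_on S g"
    using f g by (simp_all add: C1_pointwise_on_imp_continuous_on)
  with f'_der f'_cont g'_der g'_cont show ?thesis
    by (intro C1_pointwise_onI[of S _ "\<lambda>x v. prod (f x) (g' x v) + prod (f' x v) (g x)"]
        bounded_bilinear.FDERIV[OF prod] continuous_on_add bounded_bilinear.continuous_on[OF prod])
qed

lemmas C1_pointwise_on_mult = C1_pointwise_on_bilinear[OF bounded_bilinear_mult]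

lemma C1_pointwise_on_inverse:
  fixes f :: "'x::real_normed_vector \<Rightarrow> real"
  assumes f: "C1_pointwise_on S f" and nz: "\<And>x. x \<in> S \<Longrightarrow> f x \<noteq> 0"
  shows "C1_pointwise_on S (\<lambda>x. inverse (f x))"
proof -
  obtain f' where "\<And>x. x \<in> S \<Longrightarrow> (f has_derivative f' x) (at x)"
    and "\<And>v. continuous_on S (\<lambda>x. f' x v)"
    using f by (metis C1_pointwise_onE)
  moreover have "continuous_on S f"
    using f by (rule C1_pointwise_on_imp_continuous_on)
  ultimately show ?thesis
    using nz
    by (intro C1_pointwise_onI[of S _ "\<lambda>x v. - (inverse (f x) * f' x v * inverse (f x))"])
       (auto intro!: derivative_eq_intros continuous_intros)
qed

lemma C1_pointwise_on_sum:
  "finite I \<Longrightarrow> (\<And>i. i \<in> I \<Longrightarrow> C1_pointwise_on S (f i)) \<Longrightarrow> C1_pointwise_on S (\<lambda>x. \<Sum>i\<in>I. f i x)"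
  by (induction I rule: finite_induct) (auto intro!: C1_pointwise_on_add)

lemma C1_pointwise_on_prod:
  fixes f :: "'i \<Rightarrow> 'x::real_normed_vector \<Rightarrow> real"
  shows "finite I \<Longrightarrow> (\<And>i. i \<in> I \<Longrightarrow> C1_pointwise_on S (f i)) \<Longrightarrow> C1_pointwise_on S (\<lambda>x. \<Prod>i\<in>I. f i x)"
  by (induction I rule: finite_induct) (auto intro!: C1_pointwise_on_mult)

lemma C1_pointwise_on_compose_linear:
  assumes f: "C1_pointwise_on T f" and L: "bounded_linear L" and LS: "L ` S \<subseteq> T"
  shows "C1_pointwise_on S (\<lambda>x. f (L x))"
proof -
  obtain f' where der: "\<And>y. y \<in> T \<Longrightarrow> (f has_derivative f' y) (at y)"
    and cont: "\<And>v. continuous_on T (\<lambda>y. f' y v)"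
    using f by (metis C1_pointwise_onE)
  show ?thesis
  proof (rule C1_pointwise_onI[of S _ "\<lambda>x v. f' (L x) (L v)"])
    show "((\<lambda>x. f (L x)) has_derivative (\<lambda>v. f' (L x) (L v))) (at x)" if "x \<in> S" for x
      using der LS that by (intro has_derivative_compose[OF bounded_linear_imp_has_derivative[OF L]]) auto
    show "continuous_on S (\<lambda>x. f' (L x) (L v))" for v
      using cont linear_continuous_on[OF L] LS by (rule continuous_on_compose2)
  qed
qed

lemma C1_pointwise_on_cong:
  assumes S: "open S" and eq: "\<And>x. x \<in> S \<Longrightarrow> f x = g x" and f: "C1_pointwise_on S f"
  shows "C1_pointwise_on S g"
proof -
  obtain f' where der: "\<And>x. x \<in> S \<Longrightarrow> (f has_derivative f' x) (at x)"
    and cont: "\<And>v. continuous_on S (\<lambda>x. f' x v)"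
    using f by (metis C1_pointwise_onE)
  show ?thesis
    using has_derivative_transform_within_open[OF der S _ eq] cont
    by (rule C1_pointwise_onI)
qed

lemma has_derivative_vec_lambda:
  fixes f :: "'i::finite \<Rightarrow> 'x::real_normed_vector \<Rightarrow> 'a::euclidean_space"
  assumes "\<And>i. (f i has_derivative f' i) (at x within S)"
  shows "((\<lambda>y. \<chi> i. f i y) has_derivative (\<lambda>v. \<chi> i. f' i v)) (at x within S)"
  by (subst has_derivative_componentwise_within)
     (auto simp: Basis_vec_def inner_axis
       intro!: bounded_linear.has_derivative[OF bounded_linear_inner_left] assms)

lemma C1_pointwise_on_componentwise:
  fixes f :: "'x::real_normed_vector \<Rightarrow> 'a::euclidean_space ^ 'n"
  shows "C1_pointwise_on S f \<longleftrightarrow> (\<forall>i. C1_pointwise_on S (\<lambda>x. f x $ i))"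
proof
  show "C1_pointwise_on S f \<Longrightarrow> \<forall>i. C1_pointwise_on S (\<lambda>x. f x $ i)"
    by (auto intro: C1_pointwise_on_linear_compose[OF bounded_linear_vec_nth])
next
  assume "\<forall>i. C1_pointwise_on S (\<lambda>x. f x $ i)"
  then have "\<forall>i. \<exists>F. (\<forall>x\<in>S. ((\<lambda>x. f x $ i) has_derivative F x) (at x)) \<and> (\<forall>v. continuous_on S (\<lambda>x. F x v))"
    unfolding C1_pointwise_on_def .
  then obtain F where der: "\<And>i x. x \<in> S \<Longrightarrow> ((\<lambda>x. f x $ i) has_derivative F i x) (at x)"
    and cont: "\<And>i v. continuous_on S (\<lambda>x. F i x v)"
    by metis
  have "((\<lambda>y. \<chi> i. f y $ i) has_derivative (\<lambda>v. \<chi> i. F i x v)) (at x)" if "x \<in> S" for x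
    using der[OF that] by (rule has_derivative_vec_lambda)
  then show "C1_pointwise_on S f"
    using cont by (intro C1_pointwise_onI[of S _ "\<lambda>x v. \<chi> i. F i x v"] continuous_on_vec_lambda) auto
qed

section \<open>Matrix inversion and the Schur complement\<close>

lemma matrix_inv_right: "invertible A \<Longrightarrow> A ** matrix_inv A = mat 1"
  and matrix_inv_left: "invertible A \<Longrightarrow> matrix_inv A ** A = mat 1"
  unfolding invertible_def matrix_inv_def by (auto intro: someI2_ex)

lemma matrix_inv_cramer:
  fixes A :: "real^'n^'n"
  assumes "invertible A"
  shows "matrix_inv A $ k $ j = det (\<chi> r c. if c = k then axis j 1 $ r else A $ r $ c) / det A"
proof -
  define x where "x = (\<chi> k. matrix_inv A $ k $ j)"
  have "A *v x = (\<chi> r. (A ** matrix_inv A) $ r $ j)"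
    by (simp add: x_def matrix_vector_mult_def matrix_matrix_mult_def vec_eq_iff)
  also have "\<dots> = axis j 1"
    using matrix_inv_right[OF assms] by (simp add: mat_def axis_def vec_eq_iff)
  finally have "x = (\<chi> k. det (\<chi> r c. if c = k then axis j 1 $ r else A $ r $ c) / det A)"
    using cramer invertible_det_nz[of A] assms by blast
  then show ?thesis
    by (simp add: x_def vec_eq_iff)
qed

lemma transpose_matrix_inv_symmetric:
  fixes A :: "real^'n^'n"
  assumes "invertible A" "transpose A = A"
  shows "transpose (matrix_inv A) = matrix_inv A"
proof -
  have left_inverse: "transpose (matrix_inv A) ** A = mat 1"
    using matrix_transpose_mul[of A "matrix_inv A"] matrix_inv_right[OF assms(1)] assms(2) by simp
  have "transpose (matrix_inv A) = (transpose (matrix_inv A) ** A) ** matrix_inv A"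
    by (simp only: matrix_mul_assoc[symmetric] matrix_inv_right[OF assms(1)] matrix_mul_rid)
  also have "\<dots> = matrix_inv A"
    by (simp add: left_inverse)
  finally show ?thesis .
qed

lemma transpose_diff: "transpose (A - B :: 'a::ab_group_add^'n^'m) = transpose A - transpose B"
  by (simp add: transpose_def vec_eq_iff)

lemma inner_matrix_vector_symmetric:
  fixes A :: "real^'n^'n"
  assumes "transpose A = A"
  shows "x \<bullet> (A *v y) = y \<bullet> (A *v x)"
  by (metis assms dot_lmul_matrix inner_commute transpose_matrix_vector)

lemma bounded_bilinear_matrix_vector_mult:
  "bounded_bilinear ((*v) :: real^'n^'m \<Rightarrow> real^'n \<Rightarrow> real^'m)"
proof -
  have "bilinear ((*v) :: real^'n^'m \<Rightarrow> real^'n \<Rightarrow> real^'m)"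
    unfolding bilinear_def
    by (auto intro!: linearI simp: matrix_vector_mult_add_rdistrib scaleR_matrix_vector_assoc)
  then show ?thesis
    by (simp add: bilinear_conv_bounded_bilinear)
qed

lemma bounded_bilinear_matrix_matrix_mult:
  "bounded_bilinear ((**) :: real^'n^'m \<Rightarrow> real^'p^'n \<Rightarrow> real^'p^'m)"
proof -
  have "bilinear ((**) :: real^'n^'m \<Rightarrow> real^'p^'n \<Rightarrow> real^'p^'m)"
    unfolding bilinear_def
    by (auto intro!: linearI
        simp: vec_eq_iff matrix_matrix_mult_def sum.distrib sum_distrib_left algebra_simps)
  then show ?thesis
    by (simp add: bilinear_conv_bounded_bilinear)
qed

lemma inj_of_pos_def:
  assumes "linear f" "\<And>v. v \<noteq> 0 \<Longrightarrow> v \<bullet> f v > 0"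
  shows "inj f"
  unfolding linear_injective_0[OF assms(1)]
  using assms(2) by (metis inner_zero_right order_less_irrefl)

lemma linear_blockmul: "linear (blockmul A11 A12 A21 A22)"
  by (rule linearI) (auto simp: blockmul_def algebra_simps)

lemma surj_blockmul_of_pos_def:
  assumes "\<And>v. v \<noteq> 0 \<Longrightarrow> v \<bullet> blockmul A11 A12 A21 A22 v > 0"
  shows "surj (blockmul A11 A12 A21 A22)"
  using linear_blockmul inj_of_pos_def[OF linear_blockmul assms] by (rule linear_inj_imp_surj)

lemma invertible_lower_block_of_pos_def:
  assumes "\<And>v. v \<noteq> 0 \<Longrightarrow> v \<bullet> blockmul A11 A12 A21 A22 v > 0"
  shows "invertible A22"
proof -
  have "v \<bullet> (A22 *v v) > 0" if "v \<noteq> 0" for v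
    using assms[of "(0, v)"] that by (simp add: blockmul_def zero_prod_def)
  then have "inj ((*v) A22)"
    by (intro inj_of_pos_def) auto
  then show ?thesis
    using matrix_left_invertible_injective invertible_left_inverse by blast
qed

lemma transpose_schur_complement:
  fixes A11 :: "real^'a^'a" and A22 :: "real^'b^'b"
  assumes "transpose A11 = A11" "transpose A22 = A22" "A21 = transpose A12" "invertible A22"
  shows "transpose (A11 - A12 ** matrix_inv A22 ** A21) = A11 - A12 ** matrix_inv A22 ** A21"
  using assms transpose_matrix_inv_symmetric[OF assms(4,2)]
  by (simp add: transpose_diff matrix_transpose_mul matrix_mul_assoc)

lemma schur_complement_solves_block_system:
  fixes A22 :: "real^'b^'b"
  assumes "blockmul A11 A12 A21 A22 w = (b, 0)" "invertible A22"
  shows "(A11 - A12 ** matrix_inv A22 ** A21) *v fst w = b"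
proof -
  have first: "A11 *v fst w + A12 *v snd w = b" and second: "A21 *v fst w + A22 *v snd w = 0"
    using assms(1) by (auto simp: blockmul_def)
  have "snd w = matrix_inv A22 *v (A22 *v snd w)"
    by (simp add: matrix_vector_mul_assoc matrix_inv_left[OF assms(2)])
  also have "A22 *v snd w = - (A21 *v fst w)"
    using second by (simp add: eq_neg_iff_add_eq_0 add.commute)
  finally have "snd w = - (matrix_inv A22 *v (A21 *v fst w))"
    using linear_neg[OF matrix_vector_mul_linear] by simp
  with first show ?thesis
    by (simp add: matrix_vector_mult_diff_rdistrib linear_neg[OF matrix_vector_mul_linear]
        flip: matrix_vector_mul_assoc)
qed

lemma C1_pointwise_on_det:
  fixes F :: "'x::real_normed_vector \<Rightarrow> real^'n^'n"
  assumes "C1_pointwise_on S F"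
  shows "C1_pointwise_on S (\<lambda>x. det (F x))"
  using assms unfolding det_def C1_pointwise_on_componentwise[of S F]
  by (intro C1_pointwise_on_sum C1_pointwise_on_mult C1_pointwise_on_prod finite_permutations)
     (auto simp: C1_pointwise_on_componentwise)

lemma C1_pointwise_on_matrix_inv:
  fixes F :: "'x::real_normed_vector \<Rightarrow> real^'n^'n"
  assumes S: "open S" and inv: "\<And>x. x \<in> S \<Longrightarrow> invertible (F x)" and F: "C1_pointwise_on S F"
  shows "C1_pointwise_on S (\<lambda>x. matrix_inv (F x))"
  unfolding C1_pointwise_on_componentwise[of S]
proof (intro allI)
  fix k j
  have "C1_pointwise_on S (\<lambda>x. \<chi> r c. if c = k then axis j 1 $ r else F x $ r $ c)"
    unfolding C1_pointwise_on_componentwise[of S]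
  proof (intro allI)
    fix r c
    show "C1_pointwise_on S (\<lambda>x. (\<chi> r c. if c = k then axis j 1 $ r else F x $ r $ c) $ r $ c)"
      using F by (cases "c = k") (simp_all add: C1_pointwise_on_componentwise)
  qed
  then have "C1_pointwise_on S
      (\<lambda>x. det (\<chi> r c. if c = k then axis j 1 $ r else F x $ r $ c) * inverse (det (F x)))"
    using F inv invertible_det_nz
    by (intro C1_pointwise_on_mult C1_pointwise_on_inverse C1_pointwise_on_det) auto
  then show "C1_pointwise_on S (\<lambda>x. matrix_inv (F x) $ k $ j)"
    by (rule C1_pointwise_on_cong[OF S, rotated]) (simp add: matrix_inv_cramer inv divide_inverse)
qed

lemma C1_pointwise_on_schur1:
  assumes "open Q" "C1_on Q D11" "C1_on Q D12" "C1_on Q D21" "C1_on Q D22"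
    and "\<And>q. q \<in> Q \<Longrightarrow> invertible (D22 q)"
  shows "C1_pointwise_on Q (schur1 D11 D12 D21 D22)"
  using assms unfolding schur1_def C1_on_iff_C1_pointwise_on
  by (intro C1_pointwise_on_diff C1_pointwise_on_bilinear[OF bounded_bilinear_matrix_matrix_mult]
      C1_pointwise_on_matrix_inv)

section \<open>The barrier function\<close>

lemma ex_inner_gt:
  fixes z :: "'a::real_inner"
  assumes "z \<noteq> 0"
  shows "\<exists>u. z \<bullet> u > c"
proof -
  have "z \<bullet> ((\<bar>c\<bar> + 1) / (z \<bullet> z)) *\<^sub>R z = \<bar>c\<bar> + 1"
    using assms by simp
  then show ?thesis
    by (metis abs_ge_self less_add_one order_le_less_trans)
qed

lemma has_derivative_quadratic_form:
  fixes e :: "'x::real_normed_vector \<Rightarrow> real^'n" and S :: "'x \<Rightarrow> real^'n^'n"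
  assumes e: "(e has_derivative e') (at x)" and S: "(S has_derivative S') (at x)"
  shows "((\<lambda>y. e y \<bullet> (S y *v e y)) has_derivative
          (\<lambda>d. e' d \<bullet> (S x *v e x) + e x \<bullet> (S' d *v e x + S x *v e' d))) (at x)"
  using has_derivative_inner[OF e bounded_bilinear.FDERIV[OF bounded_bilinear_matrix_vector_mult S e]]
  by (rule has_derivative_eq_rhs) (simp add: fun_eq_iff algebra_simps)

lemma ua_h_altdef:
  "ua_h D11 D12 D21 D22 h01 k01 \<mu> = (\<lambda>x. h01 (fst (fst x)) - (1 / (2 * \<mu>)) *
     ((fst (snd x) - k01 (fst (fst x))) \<bullet>
      (schur1 D11 D12 D21 D22 (fst x) *v (fst (snd x) - k01 (fst (fst x))))))"
  by (simp add: fun_eq_iff ua_h_def Let_def)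

lemma has_derivative_ua_h:
  fixes x :: "((real^'a) \<times> (real^'b)) \<times> ((real^'a) \<times> (real^'b))"
    and k01 :: "real^'a \<Rightarrow> real^'a"
    and D11 :: "(real^'a) \<times> (real^'b) \<Rightarrow> real^'a^'a" and D12 :: "(real^'a) \<times> (real^'b) \<Rightarrow> real^'b^'a"
    and D21 :: "(real^'a) \<times> (real^'b) \<Rightarrow> real^'a^'b" and D22 :: "(real^'a) \<times> (real^'b) \<Rightarrow> real^'b^'b"
  defines "q \<equiv> fst x" and "e \<equiv> fst (snd x) - k01 (fst (fst x))" and "S \<equiv> schur1 D11 D12 D21 D22"
  assumes h01: "(h01 has_derivative Dh) (at (fst q))"
    and k01: "(k01 has_derivative Dk) (at (fst q))"
    and S: "(S has_derivative DS) (at q)"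
  shows "(ua_h D11 D12 D21 D22 h01 k01 \<mu> has_derivative
     (\<lambda>d. Dh (fst (fst d)) - (1 / (2 * \<mu>)) *
        ((fst (snd d) - Dk (fst (fst d))) \<bullet> (S q *v e)
         + e \<bullet> (DS (fst d) *v e + S q *v (fst (snd d) - Dk (fst (fst d))))))) (at x)"
proof -
  have fst_fst: "((\<lambda>y. fst (fst y)) has_derivative (\<lambda>d. fst (fst d))) (at x)"
    by (intro derivative_intros)
  have h01_der: "((\<lambda>y. h01 (fst (fst y))) has_derivative (\<lambda>d. Dh (fst (fst d)))) (at x)"
    using has_derivative_compose[OF fst_fst h01[unfolded q_def]] .
  have e_der: "((\<lambda>y. fst (snd y) - k01 (fst (fst y))) has_derivative
      (\<lambda>d. fst (snd d) - Dk (fst (fst d)))) (at x)"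
    using has_derivative_compose[OF fst_fst k01[unfolded q_def]]
    by (rule has_derivative_diff[OF has_derivative_fst[OF has_derivative_snd[OF has_derivative_ident]]])
  have S_der: "((\<lambda>y. S (fst y)) has_derivative (\<lambda>d. DS (fst d))) (at x)"
    using has_derivative_compose[OF has_derivative_fst[OF has_derivative_ident] S[unfolded q_def]] .
  show ?thesis
    unfolding ua_h_altdef S_def q_def e_def
    using has_derivative_diff[OF h01_der has_derivative_mult_right[OF
        has_derivative_quadratic_form[OF e_der S_der[unfolded S_def]]]] .
qed

lemma C1_on_ua_h:
  assumes h01: "C1_on Q1 h01" and k01: "C1_on Q1 k01"
    and S: "C1_pointwise_on (Q1 \<times> Q2) (schur1 D11 D12 D21 D22)"
  shows "C1_on ((Q1 \<times> Q2) \<times> UNIV) (ua_h D11 D12 D21 D22 h01 k01 \<mu>)"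
proof -
  let ?X = "(Q1 \<times> Q2) \<times> (UNIV :: ((real^'a) \<times> (real^'b)) set)"
  have fst_fst: "bounded_linear (\<lambda>x :: ((real^'a) \<times> (real^'b)) \<times> _. fst (fst x))"
    by (intro bounded_linear_compose[OF bounded_linear_fst bounded_linear_fst])
  have h01_fst: "C1_pointwise_on ?X (\<lambda>x. h01 (fst (fst x)))"
    using h01 unfolding C1_on_iff_C1_pointwise_on
    by (rule C1_pointwise_on_compose_linear[OF _ fst_fst]) auto
  have e: "C1_pointwise_on ?X (\<lambda>x. fst (snd x) - k01 (fst (fst x)))"
  proof (rule C1_pointwise_on_diff)
    show "C1_pointwise_on ?X (\<lambda>x. fst (snd x))"
      by (intro C1_pointwise_on_bounded_linear
          bounded_linear_compose[OF bounded_linear_fst bounded_linear_snd])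
    show "C1_pointwise_on ?X (\<lambda>x. k01 (fst (fst x)))"
      using k01 unfolding C1_on_iff_C1_pointwise_on
      by (rule C1_pointwise_on_compose_linear[OF _ fst_fst]) auto
  qed
  have S_fst: "C1_pointwise_on ?X (\<lambda>x. schur1 D11 D12 D21 D22 (fst x))"
    using S by (rule C1_pointwise_on_compose_linear[OF _ bounded_linear_fst]) auto
  show ?thesis
    unfolding ua_h_altdef C1_on_iff_C1_pointwise_on
    using C1_pointwise_on_diff[OF h01_fst C1_pointwise_on_mult[OF C1_pointwise_on_const
        C1_pointwise_on_bilinear[OF bounded_bilinear_inner e
          C1_pointwise_on_bilinear[OF bounded_bilinear_matrix_vector_mult S_fst e]]]] .
qed

lemma Lie_g_ua_h:
  fixes x :: "((real^'a) \<times> (real^'b)) \<times> ((real^'a) \<times> (real^'b))"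
    and k01 :: "real^'a \<Rightarrow> real^'a"
    and D11 :: "(real^'a) \<times> (real^'b) \<Rightarrow> real^'a^'a" and D12 :: "(real^'a) \<times> (real^'b) \<Rightarrow> real^'b^'a"
    and D21 :: "(real^'a) \<times> (real^'b) \<Rightarrow> real^'a^'b" and D22 :: "(real^'a) \<times> (real^'b) \<Rightarrow> real^'b^'b"
  defines "q \<equiv> fst x" and "e \<equiv> fst (snd x) - k01 (fst (fst x))" and "S \<equiv> schur1 D11 D12 D21 D22"
  assumes h01: "(h01 has_derivative Dh) (at (fst q))"
    and k01: "(k01 has_derivative Dk) (at (fst q))"
    and S: "(S has_derivative DS) (at q)"
    and S_symmetric: "transpose (S q) = S q"
    and D22_invertible: "invertible (D22 q)"
    and D_surj: "surj (blockmul (D11 q) (D12 q) (D21 q) (D22 q))"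
  shows "Lie_g (ua_h D11 D12 D21 D22 h01 k01 \<mu>) (ua_g D11 D12 D21 D22 B1) x u
    = - (1 / \<mu>) * ((e v* B1) \<bullet> u)"
proof -
  \<comment> \<open>\<^const>\<open>ua_g\<close> uses the Hilbert-choice \<^const>\<open>inv\<close>, a right inverse only because of \<open>D_surj\<close>.\<close>
  define w where "w = inv (blockmul (D11 q) (D12 q) (D21 q) (D22 q)) (B1 *v u, 0)"
  have "blockmul (D11 q) (D12 q) (D21 q) (D22 q) w = (B1 *v u, 0)"
    unfolding w_def using D_surj by (rule surj_f_inv_f)
  then have Sw: "S q *v fst w = B1 *v u"
    using D22_invertible unfolding S_def schur1_def by (rule schur_complement_solves_block_system)
  have "linear Dh" "linear Dk" "linear DS"
    using h01 k01 S by (simp_all add: has_derivative_linear)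
  then have "Dh 0 = 0" "Dk 0 = 0" "DS 0 = 0"
    by (simp_all add: linear_0)
  then have "Lie_g (ua_h D11 D12 D21 D22 h01 k01 \<mu>) (ua_g D11 D12 D21 D22 B1) x u
      = - (1 / (2 * \<mu>)) * (fst w \<bullet> (S q *v e) + e \<bullet> (S q *v fst w))"
    using frechet_derivative_at[OF has_derivative_ua_h[OF h01[unfolded q_def] k01[unfolded q_def]
        S[unfolded q_def S_def]], symmetric]
    by (simp add: Lie_g_def ua_g_def w_def q_def e_def S_def)
  also have "fst w \<bullet> (S q *v e) = e \<bullet> (S q *v fst w)"
    using S_symmetric by (rule inner_matrix_vector_symmetric)
  finally show ?thesis
    by (simp add: Sw dot_lmul_matrix)
qed

lemma Lie_f_ua_h_at_reference:
  fixes x :: "((real^'a) \<times> (real^'b)) \<times> ((real^'a) \<times> (real^'b))"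
  assumes h01: "(h01 has_derivative Dh) (at (fst (fst x)))"
    and k01: "(k01 has_derivative Dk) (at (fst (fst x)))"
    and S: "(schur1 D11 D12 D21 D22 has_derivative DS) (at (fst x))"
    and reference: "fst (snd x) = k01 (fst (fst x))"
  shows "Lie_f (ua_h D11 D12 D21 D22 h01 k01 \<mu>) (ua_f D11 D12 D21 D22 H) x = Dh (k01 (fst (fst x)))"
  using frechet_derivative_at[OF has_derivative_ua_h[OF h01 k01 S]] reference
  by (simp add: Lie_f_def ua_f_def)

lemma ex_input_ua_h_CBF_condition:
  fixes x :: "((real^'a) \<times> (real^'b)) \<times> ((real^'a) \<times> (real^'b))"
    and B1 :: "real^'m^'a"
  assumes h01: "(h01 has_derivative Dh) (at (fst (fst x)))"
    and k01: "(k01 has_derivative Dk) (at (fst (fst x)))"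
    and S: "(schur1 D11 D12 D21 D22 has_derivative DS) (at (fst x))"
    and S_symmetric: "transpose (schur1 D11 D12 D21 D22 (fst x)) = schur1 D11 D12 D21 D22 (fst x)"
    and D22_invertible: "invertible (D22 (fst x))"
    and D_surj: "surj (blockmul (D11 (fst x)) (D12 (fst x)) (D21 (fst x)) (D22 (fst x)))"
    and B1_pinv: "\<forall>v. v v* B1 = 0 \<longrightarrow> v = 0"
    and k01_safe: "Dh (k01 (fst (fst x))) > - \<alpha> (h01 (fst (fst x)))"
    and \<mu>: "\<mu> \<noteq> 0"
  shows "\<exists>u. Lie_f (ua_h D11 D12 D21 D22 h01 k01 \<mu>) (ua_f D11 D12 D21 D22 H) x
    + Lie_g (ua_h D11 D12 D21 D22 h01 k01 \<mu>) (ua_g D11 D12 D21 D22 B1) x u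
    > - \<alpha> (ua_h D11 D12 D21 D22 h01 k01 \<mu> x)"
proof (cases "fst (snd x) = k01 (fst (fst x))")
  case True
  then show ?thesis
    using Lie_g_ua_h[OF h01 k01 S S_symmetric D22_invertible D_surj, of \<mu> B1 0]
      Lie_f_ua_h_at_reference[OF h01 k01 S True] k01_safe
    by (intro exI[of _ 0]) (simp add: ua_h_def)
next
  case False
  then have "(- (1 / \<mu>)) *\<^sub>R ((fst (snd x) - k01 (fst (fst x))) v* B1) \<noteq> 0"
    using B1_pinv \<mu> by auto
  then obtain u where "(- (1 / \<mu>)) *\<^sub>R ((fst (snd x) - k01 (fst (fst x))) v* B1) \<bullet> u
      > - \<alpha> (ua_h D11 D12 D21 D22 h01 k01 \<mu> x)
        - Lie_f (ua_h D11 D12 D21 D22 h01 k01 \<mu>) (ua_f D11 D12 D21 D22 H) x"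
    using ex_inner_gt by blast
  then show ?thesis
    using Lie_g_ua_h[OF h01 k01 S S_symmetric D22_invertible D_surj, of \<mu> B1 u]
    by (intro exI[of _ u]) simp
qed

theorem theorem10:
  fixes Q1 :: "(real^'n1) set" and Q2 :: "(real^'n2) set"
    and D11 :: "(real^'n1) \<times> (real^'n2) \<Rightarrow> real^'n1^'n1"
    and D12 :: "(real^'n1) \<times> (real^'n2) \<Rightarrow> real^'n2^'n1"
    and D21 :: "(real^'n1) \<times> (real^'n2) \<Rightarrow> real^'n1^'n2"
    and D22 :: "(real^'n1) \<times> (real^'n2) \<Rightarrow> real^'n2^'n2"
    and H :: "((real^'n1) \<times> (real^'n2)) \<times> ((real^'n1) \<times> (real^'n2)) \<Rightarrow> (real^'n1) \<times> (real^'n2)"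
    and B1 :: "real^'m^'n1"
    and h01 :: "real^'n1 \<Rightarrow> real" and k01 :: "real^'n1 \<Rightarrow> real^'n1"
    and \<alpha> :: "real \<Rightarrow> real" and \<mu> :: real
  assumes Q_open: "open Q1" "open Q2"
    and D_sym: "\<forall>q\<in>Q1 \<times> Q2. transpose (D11 q) = D11 q \<and> transpose (D22 q) = D22 q
                              \<and> D21 q = transpose (D12 q)"
    and D_pd: "\<forall>q\<in>Q1 \<times> Q2. \<forall>v. v \<noteq> 0 \<longrightarrow> v \<bullet> blockmul (D11 q) (D12 q) (D21 q) (D22 q) v > 0"
    and D_C1: "C1_on (Q1 \<times> Q2) D11" "C1_on (Q1 \<times> Q2) D12" "C1_on (Q1 \<times> Q2) D21" "C1_on (Q1 \<times> Q2) D22"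
    and h01_C1: "C1_on Q1 h01"
    and B1_pinv: "\<forall>v. v v* B1 = 0 \<longrightarrow> v = 0"
    and k01_C1: "C1_on Q1 k01"
    and \<alpha>_K: "ext_class_Kinf \<alpha>"
    and k01_safe: "\<forall>q1\<in>Q1. frechet_derivative h01 (at q1) (k01 q1) > - \<alpha> (h01 q1)"
    and \<mu>_pos: "\<mu> > 0"
  shows "is_CBF_on ((Q1 \<times> Q2) \<times> UNIV)
           (ua_f D11 D12 D21 D22 H) (ua_g D11 D12 D21 D22 B1)
           (ua_h D11 D12 D21 D22 h01 k01 \<mu>)
           {x \<in> (Q1 \<times> Q2) \<times> UNIV. ua_h D11 D12 D21 D22 h01 k01 \<mu> x \<ge> 0}"
proof -
  have D22_invertible: "invertible (D22 q)" if "q \<in> Q1 \<times> Q2" for q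
    using D_pd that by (intro invertible_lower_block_of_pos_def[of "D11 q" "D12 q" "D21 q"]) auto
  have S_C1: "C1_pointwise_on (Q1 \<times> Q2) (schur1 D11 D12 D21 D22)"
    using open_Times[OF Q_open] D_C1 D22_invertible by (rule C1_pointwise_on_schur1)
  then obtain DS where DS: "\<And>q. q \<in> Q1 \<times> Q2 \<Longrightarrow> (schur1 D11 D12 D21 D22 has_derivative DS q) (at q)"
    by (metis C1_pointwise_onE)
  obtain Dh where Dh: "\<forall>q1\<in>Q1. (h01 has_derivative blinfun_apply (Dh q1)) (at q1)"
    using h01_C1 unfolding C1_on_def by blast
  obtain Dk where Dk: "\<forall>q1\<in>Q1. (k01 has_derivative blinfun_apply (Dk q1)) (at q1)"
    using k01_C1 unfolding C1_on_def by blast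
  have "\<exists>u. Lie_f (ua_h D11 D12 D21 D22 h01 k01 \<mu>) (ua_f D11 D12 D21 D22 H) x
      + Lie_g (ua_h D11 D12 D21 D22 h01 k01 \<mu>) (ua_g D11 D12 D21 D22 B1) x u
      > - \<alpha> (ua_h D11 D12 D21 D22 h01 k01 \<mu> x)" if "x \<in> (Q1 \<times> Q2) \<times> UNIV" for x
  proof (rule ex_input_ua_h_CBF_condition)
    have q: "fst x \<in> Q1 \<times> Q2" and q1: "fst (fst x) \<in> Q1"
      using that by auto
    show "(h01 has_derivative blinfun_apply (Dh (fst (fst x)))) (at (fst (fst x)))"
      "(k01 has_derivative blinfun_apply (Dk (fst (fst x)))) (at (fst (fst x)))"
      using Dh Dk q1 by auto
    show "Dh (fst (fst x)) (k01 (fst (fst x))) > - \<alpha> (h01 (fst (fst x)))"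
      using k01_safe frechet_derivative_at[OF \<open>(h01 has_derivative _) _\<close>] q1 by auto
    show "(schur1 D11 D12 D21 D22 has_derivative DS (fst x)) (at (fst x))"
      using DS q .
    show "transpose (schur1 D11 D12 D21 D22 (fst x)) = schur1 D11 D12 D21 D22 (fst x)"
      using D_sym D22_invertible q unfolding schur1_def by (intro transpose_schur_complement) auto
    show "surj (blockmul (D11 (fst x)) (D12 (fst x)) (D21 (fst x)) (D22 (fst x)))"
      using D_pd q by (intro surj_blockmul_of_pos_def) auto
  qed (use D22_invertible B1_pinv \<mu>_pos that in auto)
  then show ?thesis
    unfolding is_CBF_on_def using C1_on_ua_h[OF h01_C1 k01_C1 S_C1] \<alpha>_K by blast
qed

end
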